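(* Let $G=(V,E,H)$ be a HEDG and $W,X,Y,Z\subseteq V$ with $(X\cup Y\cup Z)\cap W=\emptyset$. Then $X$ is $\sigma$-separated from $Y$ given $Z$ in $G$ if and only if $X$ is $\sigma$-separated from $Y$ given $Z$ in the marginalization $G^{\mathrm{marg}\setminus W}$.
   Context: HEDG $G=(V,E,H)$: $V$ finite, $E\subseteq V\times V$ (self-loops allowed), $H$ a simplicial complex on $V$ (contains all singletons, closed under subsets); for distinct $v,w$, $v\leftrightarrow w$ means $\{v,w\}\in H$. $\mathrm{Anc}^G(v)$ ($\mathrm{Desc}^G(v)$): nodes with a directed path to (from) $v$, including $v$; $\mathrm{Sc}^G(v)=\mathrm{Anc}^G(v)\cap\mathrm{Desc}^G(v)$. Marginalization $G^{\mathrm{marg}\setminus W}=(V\setminus W,E',H')$: $v_1\to v_2\in E'$ iff $G$ has a directed path $v_1\to u_1\to\cdots\to u_r\to v_2$ with $r\ge0$, all $u_i\in W$; $F'\subseteq V\setminus W$ is in $H'$ iff there is $F\in H$ with $F\subseteq F'\cup W$ such that each $v\in F'$ either lies in $F\setminus W$ or there is a directed path $u_1\to\cdots\to u_r\to v$, $r\ge1$, all $u_i\in W$, $u_1\in F\cap W$. A path is a node sequence $v_1,\dots,v_n$ ($n\ge1$, repetitions allowed) with consecutive nodes joined by $\to$, $\leftarrow$ or $\leftrightarrow$. It is $Z$-$\sigma$-blocked if (a) $v_1\in Z$ or $v_n\in Z$; or (b) some intermediate $v_i$ is a collider (both adjacent edges have an arrowhead at $v_i$) with $v_i\notin\mathrm{Anc}^G(Z)$;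 or (c) some intermediate non-collider $v_i\in Z$ has, on the path, an outgoing directed edge $v_i\to v_{i+1}$ with $v_{i+1}\notin\mathrm{Sc}^G(v_i)$ or $v_{i-1}\leftarrow v_i$ with $v_{i-1}\notin\mathrm{Sc}^G(v_i)$. $X$ is $\sigma$-separated from $Y$ given $Z$ if every path with one endnode in $X$ and the other in $Y$ is $Z$-$\sigma$-blocked. *)

theory Defs
  imports Main
begin

definition simplicial_complex :: "'a set \<Rightarrow> 'a set set \<Rightarrow> bool" where
  "simplicial_complex V H \<longleftrightarrow>
     (\<forall>F\<in>H. F \<subseteq> V) \<and> (\<forall>v\<in>V. {v} \<in> H) \<and> (\<forall>F\<in>H. \<forall>F'. F' \<subseteq> F \<longrightarrow> F' \<in> H)"

definition hedg :: "'a set \<Rightarrow> ('a \<times> 'a) set \<Rightarrow> 'a set set \<Rightarrow> bool" where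
  "hedg V E H \<longleftrightarrow> finite V \<and> E \<subseteq> V \<times> V \<and> simplicial_complex V H"

definition anc :: "('a \<times> 'a) set \<Rightarrow> 'a \<Rightarrow> 'a set" where
  "anc E v = {u. (u, v) \<in> E\<^sup>*}"

definition desc :: "('a \<times> 'a) set \<Rightarrow> 'a \<Rightarrow> 'a set" where
  "desc E v = {u. (v, u) \<in> E\<^sup>*}"

definition sc :: "('a \<times> 'a) set \<Rightarrow> 'a \<Rightarrow> 'a set" where
  "sc E v = anc E v \<inter> desc E v"

definition anc_set :: "('a \<times> 'a) set \<Rightarrow> 'a set \<Rightarrow> 'a set" where
  "anc_set E Z = (\<Union>z\<in>Z. anc E z)"

text \<open>Directed path a \<rightarrow> u1 \<rightarrow> ... \<rightarrow> ur \<rightarrow> b with r \<ge> 0 and all ui in W.\<close>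
definition dpath_via :: "('a \<times> 'a) set \<Rightarrow> 'a set \<Rightarrow> 'a \<Rightarrow> 'a \<Rightarrow> bool" where
  "dpath_via E W a b \<longleftrightarrow> (a, b) \<in> {(x, y). (x, y) \<in> E \<and> y \<in> W}\<^sup>* O E"

definition marg_E :: "'a set \<Rightarrow> ('a \<times> 'a) set \<Rightarrow> 'a set \<Rightarrow> ('a \<times> 'a) set" where
  "marg_E V E W = {(a, b). a \<in> V - W \<and> b \<in> V - W \<and> dpath_via E W a b}"

definition marg_H :: "'a set \<Rightarrow> ('a \<times> 'a) set \<Rightarrow> 'a set set \<Rightarrow> 'a set \<Rightarrow> 'a set set" where
  "marg_H V E H W = {F'. F' \<subseteq> V - W \<and>
     (\<exists>F\<in>H. F \<subseteq> F' \<union> W \<and>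
        (\<forall>v\<in>F'. v \<in> F - W \<or> (\<exists>u\<in>F \<inter> W. dpath_via E W u v)))}"

text \<open>Edge kinds on a path: Fwd at position i means v_i \<rightarrow> v_(i+1),
  Bwd means v_i \<leftarrow> v_(i+1), Bi means v_i \<leftrightarrow> v_(i+1).\<close>
datatype edge_kind = Fwd | Bwd | Bi

definition edge_ok :: "('a \<times> 'a) set \<Rightarrow> 'a set set \<Rightarrow> 'a \<Rightarrow> edge_kind \<Rightarrow> 'a \<Rightarrow> bool" where
  "edge_ok E H a k b \<longleftrightarrow>
     (case k of Fwd \<Rightarrow> (a, b) \<in> E | Bwd \<Rightarrow> (b, a) \<in> E | Bi \<Rightarrow> a \<noteq> b \<and> {a, b} \<in> H)"

definition is_path :: "'a set \<Rightarrow> ('a \<times> 'a) set \<Rightarrow> 'a set set \<Rightarrow> 'a list \<Rightarrow> edge_kind list \<Rightarrow> bool" where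
  "is_path V E H vs es \<longleftrightarrow> vs \<noteq> [] \<and> set vs \<subseteq> V \<and> length es = length vs - 1 \<and>
     (\<forall>i < length es. edge_ok E H (vs ! i) (es ! i) (vs ! Suc i))"

text \<open>Arrowhead of edge es!(i-1) at node i, resp. of edge es!i at node i.\<close>
definition head_in :: "edge_kind \<Rightarrow> bool" where
  "head_in k \<longleftrightarrow> k = Fwd \<or> k = Bi"

definition head_out :: "edge_kind \<Rightarrow> bool" where
  "head_out k \<longleftrightarrow> k = Bwd \<or> k = Bi"

definition collider :: "edge_kind list \<Rightarrow> nat \<Rightarrow> bool" where
  "collider es i \<longleftrightarrow> head_in (es ! (i - 1)) \<and> head_out (es ! i)"

definition sigma_blocked :: "('a \<times> 'a) set \<Rightarrow> 'a set \<Rightarrow> 'a list \<Rightarrow> edge_kind list \<Rightarrow> bool" where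
  "sigma_blocked E Z vs es \<longleftrightarrow>
     hd vs \<in> Z \<or> last vs \<in> Z \<or>
     (\<exists>i. 0 < i \<and> i < length vs - 1 \<and> collider es i \<and> vs ! i \<notin> anc_set E Z) \<or>
     (\<exists>i. 0 < i \<and> i < length vs - 1 \<and> \<not> collider es i \<and> vs ! i \<in> Z \<and>
        ((es ! i = Fwd \<and> vs ! Suc i \<notin> sc E (vs ! i)) \<or>
         (es ! (i - 1) = Bwd \<and> vs ! (i - 1) \<notin> sc E (vs ! i))))"

definition sigma_sep :: "'a set \<Rightarrow> ('a \<times> 'a) set \<Rightarrow> 'a set set \<Rightarrow> 'a set \<Rightarrow> 'a set \<Rightarrow> 'a set \<Rightarrow> bool" where
  "sigma_sep V E H X Y Z \<longleftrightarrow>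
     (\<forall>vs es. is_path V E H vs es \<and>
        ((hd vs \<in> X \<and> last vs \<in> Y) \<or> (hd vs \<in> Y \<and> last vs \<in> X))
        \<longrightarrow> sigma_blocked E Z vs es)"

end

theory Submission
  imports Defs
begin

(* Whether a path is sigma-blocked is decided by conditions on consecutive triples of nodes,
   so sigma-separation is the absence of certain walks in a transition system whose states
   remember the previous node and the kind of the last edge ("open walks").

   Marginalizing a node set W disjoint from Z preserves reachability, the ancestors of Z and
   the strongly connected components among the remaining nodes, so the local conditions agree
   at visible nodes. An open walk of the marginal graph expands to one of the original graph:
   a marginal edge becomes a directed path through W whose hidden nodes are open non-colliders
   outside Z. Conversely an open walk of the original graph is simulated step by step, each
   excursion into W being collapsed onto the last visible node before it; a hidden collider
   in the ancestors of Z is bypassed by a detour to its first visible descendant. *)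

section \<open>Sigma-separation via open walks\<close>

(* A state Some (p, k) records the previous node p and the kind k of the edge from p to the
   current node v; the flag ho tells whether the next edge has an arrowhead at v. *)
definition open_entry ::
    "('a \<times> 'a) set \<Rightarrow> 'a set \<Rightarrow> ('a \<times> edge_kind) option \<Rightarrow> 'a \<Rightarrow> bool \<Rightarrow> bool" where
  "open_entry E Z st v ho \<longleftrightarrow> (case st of None \<Rightarrow> True | Some (p, k) \<Rightarrow>
     (head_in k \<and> ho \<longrightarrow> v \<in> anc_set E Z) \<and> (v \<in> Z \<and> k = Bwd \<longrightarrow> p \<in> sc E v))"

definition open_exit :: "('a \<times> 'a) set \<Rightarrow> 'a set \<Rightarrow> 'a \<Rightarrow> edge_kind \<Rightarrow> 'a \<Rightarrow> bool" where
  "open_exit E Z v k n \<longleftrightarrow> (v \<in> Z \<and> k = Fwd \<longrightarrow> n \<in> sc E v)"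

inductive open_walk ::
    "'a set \<Rightarrow> ('a \<times> 'a) set \<Rightarrow> 'a set set \<Rightarrow> 'a set \<Rightarrow> 'a \<Rightarrow> ('a \<times> edge_kind) option \<Rightarrow> 'a \<Rightarrow> bool"
  for V E H Z x where
  start: "x \<in> V \<Longrightarrow> x \<notin> Z \<Longrightarrow> open_walk V E H Z x None x"
| step: "open_walk V E H Z x st v \<Longrightarrow> edge_ok E H v k n \<Longrightarrow> n \<in> V \<Longrightarrow>
    open_entry E Z st v (head_out k) \<Longrightarrow> open_exit E Z v k n \<Longrightarrow>
    open_walk V E H Z x (Some (v, k)) n"

definition interior_open :: "('a \<times> 'a) set \<Rightarrow> 'a set \<Rightarrow> 'a list \<Rightarrow> edge_kind list \<Rightarrow> bool" where
  "interior_open E Z vs es \<longleftrightarrow> (\<forall>i. 0 < i \<longrightarrow> i < length vs - 1 \<longrightarrow>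
     open_entry E Z (Some (vs ! (i - 1), es ! (i - 1))) (vs ! i) (head_out (es ! i)) \<and>
     open_exit E Z (vs ! i) (es ! i) (vs ! Suc i))"

lemma not_sigma_blocked_iff:
  "\<not> sigma_blocked E Z vs es \<longleftrightarrow> hd vs \<notin> Z \<and> last vs \<notin> Z \<and> interior_open E Z vs es"
  unfolding sigma_blocked_def interior_open_def
proof (intro iffI conjI allI impI)
  fix i
  assume "\<not> (hd vs \<in> Z \<or> last vs \<in> Z \<or>
     (\<exists>i. 0 < i \<and> i < length vs - 1 \<and> collider es i \<and> vs ! i \<notin> anc_set E Z) \<or>
     (\<exists>i. 0 < i \<and> i < length vs - 1 \<and> \<not> collider es i \<and> vs ! i \<in> Z \<and>
        ((es ! i = Fwd \<and> vs ! Suc i \<notin> sc E (vs ! i)) \<or>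
         (es ! (i - 1) = Bwd \<and> vs ! (i - 1) \<notin> sc E (vs ! i)))))"
    and "0 < i" "i < length vs - 1"
  then show "open_entry E Z (Some (vs ! (i - 1), es ! (i - 1))) (vs ! i) (head_out (es ! i))"
    "open_exit E Z (vs ! i) (es ! i) (vs ! Suc i)"
    unfolding open_entry_def open_exit_def collider_def head_in_def head_out_def
    by (cases "es ! i"; cases "es ! (i - 1)"; auto)+
qed (auto simp: open_entry_def open_exit_def collider_def head_in_def head_out_def
       split: edge_kind.splits)

lemma open_walk_of_path:
  assumes path: "is_path V E H vs es" and "hd vs \<notin> Z" and "interior_open E Z vs es"
    and "m < length vs"
  shows "open_walk V E H Z (hd vs)
           (if m = 0 then None else Some (vs ! (m - 1), es ! (m - 1))) (vs ! m)"
  using \<open>m < length vs\<close>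
proof (induction m)
  case 0
  then show ?case
    using path \<open>hd vs \<notin> Z\<close> by (auto simp: is_path_def hd_conv_nth intro!: open_walk.start)
next
  case (Suc m)
  have walk: "open_walk V E H Z (hd vs)
      (if m = 0 then None else Some (vs ! (m - 1), es ! (m - 1))) (vs ! m)"
    using Suc by simp
  have edge: "edge_ok E H (vs ! m) (es ! m) (vs ! Suc m)" and "vs ! Suc m \<in> V"
    using path Suc.prems by (auto simp: is_path_def)
  have "open_entry E Z (if m = 0 then None else Some (vs ! (m - 1), es ! (m - 1)))
          (vs ! m) (head_out (es ! m)) \<and> open_exit E Z (vs ! m) (es ! m) (vs ! Suc m)"
  proof (cases "m = 0")
    case True
    have "vs ! 0 = hd vs"
      using Suc.prems by (cases vs) auto
    then show ?thesis
      using True \<open>hd vs \<notin> Z\<close> by (simp add: open_entry_def open_exit_def)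
  next
    case False
    then show ?thesis
      using \<open>interior_open E Z vs es\<close> Suc.prems unfolding interior_open_def by auto
  qed
  then show ?case
    using open_walk.step[OF walk edge \<open>vs ! Suc m \<in> V\<close>] by simp
qed

lemma is_path_snoc:
  assumes path: "is_path V E H vs es" and "edge_ok E H (last vs) k n" and "n \<in> V"
  shows "is_path V E H (vs @ [n]) (es @ [k])"
  unfolding is_path_def
proof (intro conjI allI impI)
  have ne: "vs \<noteq> []" and les: "length es = length vs - 1"
    using path by (auto simp: is_path_def)
  show "vs @ [n] \<noteq> []" "set (vs @ [n]) \<subseteq> V" "length (es @ [k]) = length (vs @ [n]) - 1"
    using path \<open>n \<in> V\<close> les ne by (auto simp: is_path_def)
  fix i
  assume "i < length (es @ [k])"
  then consider "i < length es" | "i = length es"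
    by fastforce
  then show "edge_ok E H ((vs @ [n]) ! i) ((es @ [k]) ! i) ((vs @ [n]) ! Suc i)"
  proof cases
    case 1
    then show ?thesis
      using path les by (auto simp: is_path_def nth_append)
  next
    case 2
    then show ?thesis
      using assms(2) les ne by (auto simp: nth_append last_conv_nth)
  qed
qed

lemma path_of_open_walk:
  assumes "open_walk V E H Z x st v"
  shows "\<exists>vs es. is_path V E H vs es \<and> hd vs = x \<and> last vs = v \<and> x \<notin> Z \<and>
    interior_open E Z vs es \<and>
    (case st of None \<Rightarrow> vs = [x] \<and> es = []
     | Some (p, k) \<Rightarrow> length vs \<ge> 2 \<and> vs ! (length vs - 2) = p \<and> es ! (length vs - 2) = k)"
  using assms
proof (induction rule: open_walk.induct)
  case start
  then show ?case by (auto simp: is_path_def interior_open_def)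
next
  case (step st v k n)
  then obtain vs es where path: "is_path V E H vs es" and ends: "hd vs = x" "last vs = v" "x \<notin> Z"
    and open_vs: "interior_open E Z vs es"
    and state: "case st of None \<Rightarrow> vs = [x] \<and> es = []
       | Some (p, k) \<Rightarrow> length vs \<ge> 2 \<and> vs ! (length vs - 2) = p \<and> es ! (length vs - 2) = k"
    by blast
  have ne: "vs \<noteq> []" and les: "length es = length vs - 1"
    using path by (auto simp: is_path_def)
  have last_nth: "vs ! (length vs - 1) = v"
    using ends ne by (simp add: last_conv_nth)
  have path': "is_path V E H (vs @ [n]) (es @ [k])"
    using is_path_snoc[OF path] step.hyps(2,3) ends by simp
  have open': "interior_open E Z (vs @ [n]) (es @ [k])"
    unfolding interior_open_def
  proof (intro allI impI)
    fix i assume i: "0 < i" "i < length (vs @ [n]) - 1"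
    show "open_entry E Z (Some ((vs @ [n]) ! (i - 1), (es @ [k]) ! (i - 1))) ((vs @ [n]) ! i)
            (head_out ((es @ [k]) ! i)) \<and>
          open_exit E Z ((vs @ [n]) ! i) ((es @ [k]) ! i) ((vs @ [n]) ! Suc i)"
    proof (cases "i < length vs - 1")
      case True
      then show ?thesis
        using open_vs i les unfolding interior_open_def by (auto simp: nth_append)
    next
      case False
      then have i_last: "i = length vs - 1" and "length vs \<ge> 2"
        using i by auto
      then obtain p k0 where "st = Some (p, k0)"
        "vs ! (length vs - 2) = p" "es ! (length vs - 2) = k0"
        using state ne by (cases st) auto
      moreover have "i - 1 = length vs - 2"
        using i_last by auto
      ultimately show ?thesis
        using step.hyps(4,5) i_last les last_nth \<open>length vs \<ge> 2\<close> by (auto simp: nth_append)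
    qed
  qed
  show ?case
    using path' open' ends ne les last_nth
    by (intro exI[of _ "vs @ [n]"] exI[of _ "es @ [k]"]) (auto simp: nth_append Suc_le_eq)
qed

lemma sigma_sep_iff_no_open_walk:
  "sigma_sep V E H X Y Z \<longleftrightarrow>
   (\<forall>x y. (x \<in> X \<and> y \<in> Y \<or> x \<in> Y \<and> y \<in> X) \<longrightarrow> \<not> (\<exists>st. open_walk V E H Z x st y \<and> y \<notin> Z))"
proof
  assume sep: "sigma_sep V E H X Y Z"
  show "\<forall>x y. (x \<in> X \<and> y \<in> Y \<or> x \<in> Y \<and> y \<in> X) \<longrightarrow> \<not> (\<exists>st. open_walk V E H Z x st y \<and> y \<notin> Z)"
  proof (intro allI impI notI)
    fix x y
    assume xy: "x \<in> X \<and> y \<in> Y \<or> x \<in> Y \<and> y \<in> X"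
      and "\<exists>st. open_walk V E H Z x st y \<and> y \<notin> Z"
    then obtain st where walk: "open_walk V E H Z x st y" and "y \<notin> Z" by blast
    from path_of_open_walk[OF walk] obtain vs es where "is_path V E H vs es" "hd vs = x"
      "last vs = y" "x \<notin> Z" "interior_open E Z vs es"
      by blast
    then show False
      using sep xy \<open>y \<notin> Z\<close> not_sigma_blocked_iff[of E Z vs es] unfolding sigma_sep_def by blast
  qed
next
  assume no_walk: "\<forall>x y. (x \<in> X \<and> y \<in> Y \<or> x \<in> Y \<and> y \<in> X) \<longrightarrow>
    \<not> (\<exists>st. open_walk V E H Z x st y \<and> y \<notin> Z)"
  show "sigma_sep V E H X Y Z"
    unfolding sigma_sep_def
  proof (intro allI impI)
    fix vs es
    assume vs: "is_path V E H vs es \<and> (hd vs \<in> X \<and> last vs \<in> Y \<or> hd vs \<in> Y \<and> last vs \<in> X)"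
    show "sigma_blocked E Z vs es"
    proof (rule ccontr)
      assume "\<not> sigma_blocked E Z vs es"
      then have "hd vs \<notin> Z" "last vs \<notin> Z" "interior_open E Z vs es"
        using not_sigma_blocked_iff by blast+
      moreover have "vs \<noteq> []"
        using vs by (auto simp: is_path_def)
      ultimately have "open_walk V E H Z (hd vs)
          (if length vs - 1 = 0 then None else Some (vs ! (length vs - 1 - 1), es ! (length vs - 1 - 1)))
          (last vs)"
        using open_walk_of_path[of V E H vs es Z "length vs - 1"] vs by (simp add: last_conv_nth)
      then show False
        using no_walk vs \<open>last vs \<notin> Z\<close> by blast
    qed
  qed
qed

lemma open_walk_nodes: "open_walk V E H Z x st v \<Longrightarrow> v \<in> V \<and> (\<forall>p k. st = Some (p, k) \<longrightarrow> p \<in> V)"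
  by (induction rule: open_walk.induct) auto

lemma open_entry_weaken: "open_entry E Z st v True \<Longrightarrow> open_entry E Z st v ho"
  by (auto simp: open_entry_def split: option.splits)

lemma open_entry_no_head: "v \<notin> Z \<Longrightarrow> open_entry E Z st v False"
  by (auto simp: open_entry_def split: option.splits)

lemma open_exit_notin: "v \<notin> Z \<Longrightarrow> open_exit E Z v k n"
  by (simp add: open_exit_def)

definition arrives_with_head :: "('a \<times> edge_kind) option \<Rightarrow> bool" where
  "arrives_with_head st \<longleftrightarrow> (case st of None \<Rightarrow> False | Some (p, k) \<Rightarrow> head_in k)"

section \<open>Directed paths through the marginalized nodes\<close>

locale hedg_marginalization =
  fixes V :: "'a set" and E :: "('a \<times> 'a) set" and H :: "'a set set" and W Z :: "'a set"
  assumes hedg: "hedg V E H" and W_subset: "W \<subseteq> V" and Z_subset: "Z \<subseteq> V"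
    and Z_disjoint: "Z \<inter> W = {}"
begin

abbreviation "EM \<equiv> marg_E V E W"
abbreviation "HM \<equiv> marg_H V E H W"
abbreviation "EW \<equiv> {(x, y). (x, y) \<in> E \<and> y \<in> W}"

lemma edge_nodes: "(a, b) \<in> E \<Longrightarrow> a \<in> V \<and> b \<in> V"
  using hedg unfolding hedg_def by auto

lemma face_subset: "F \<in> H \<Longrightarrow> F \<subseteq> V"
  using hedg unfolding hedg_def simplicial_complex_def by auto

lemma singleton_face: "v \<in> V \<Longrightarrow> {v} \<in> H"
  using hedg unfolding hedg_def simplicial_complex_def by auto

lemma face_subset_closed: "F \<in> H \<Longrightarrow> F' \<subseteq> F \<Longrightarrow> F' \<in> H"
  using hedg unfolding hedg_def simplicial_complex_def by blast

lemma dpath_via_trancl: "dpath_via E W a b \<Longrightarrow> (a, b) \<in> E\<^sup>+"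
proof -
  assume "dpath_via E W a b"
  then obtain m where "(a, m) \<in> EW\<^sup>*" "(m, b) \<in> E"
    unfolding dpath_via_def by blast
  moreover have "EW\<^sup>* \<subseteq> E\<^sup>*"
    by (rule rtrancl_mono) auto
  ultimately show ?thesis
    by (blast intro: rtrancl_into_trancl1)
qed

lemma dpath_via_rtrancl: "dpath_via E W a b \<Longrightarrow> (a, b) \<in> E\<^sup>*"
  using dpath_via_trancl by (meson trancl_into_rtrancl)

lemma dpath_via_edge: "(a, b) \<in> E \<Longrightarrow> dpath_via E W a b"
  unfolding dpath_via_def by blast

lemma dpath_via_trans: "dpath_via E W a b \<Longrightarrow> b \<in> W \<Longrightarrow> dpath_via E W b c \<Longrightarrow> dpath_via E W a c"
proof -
  assume ab: "dpath_via E W a b" and "b \<in> W" and bc: "dpath_via E W b c"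
  obtain m where "(a, m) \<in> EW\<^sup>*" "(m, b) \<in> E"
    using ab unfolding dpath_via_def by blast
  then have "(a, b) \<in> EW\<^sup>*"
    using \<open>b \<in> W\<close> by (simp add: rtrancl_into_rtrancl)
  moreover obtain m' where "(b, m') \<in> EW\<^sup>*" "(m', c) \<in> E"
    using bc unfolding dpath_via_def by blast
  ultimately show ?thesis
    unfolding dpath_via_def by (meson relcomp.relcompI rtrancl_trans)
qed

lemma dpath_via_nodes: "dpath_via E W a b \<Longrightarrow> a \<in> V \<and> b \<in> V"
  by (metis dpath_via_trancl edge_nodes tranclD tranclD2)

lemma dpath_via_cases:
  "dpath_via E W a b \<Longrightarrow> (a, b) \<in> E \<or> (\<exists>u. (a, u) \<in> E \<and> u \<in> W \<and> dpath_via E W u b)"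
proof -
  assume "dpath_via E W a b"
  then obtain m where m: "(a, m) \<in> EW\<^sup>*" "(m, b) \<in> E"
    unfolding dpath_via_def by blast
  from m(1) show ?thesis
  proof (cases rule: converse_rtranclE)
    case base
    then show ?thesis using m by simp
  next
    case (step u)
    then show ?thesis using m unfolding dpath_via_def by blast
  qed
qed

lemma dpath_via_first_exit:
  "(w, t) \<in> E\<^sup>* \<Longrightarrow> w \<in> W \<Longrightarrow> t \<notin> W \<Longrightarrow> \<exists>c. c \<notin> W \<and> dpath_via E W w c \<and> (c, t) \<in> E\<^sup>*"
proof (induction rule: converse_rtrancl_induct)
  case base
  then show ?case by simp
next
  case (step y z)
  show ?case
  proof (cases "z \<in> W")
    case True
    then obtain c where "c \<notin> W" "dpath_via E W z c" "(c, t) \<in> E\<^sup>*"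
      using step by blast
    then show ?thesis
      using dpath_via_trans[OF dpath_via_edge[OF step(1)] True] by blast
  next
    case False
    then show ?thesis
      using step dpath_via_edge by blast
  qed
qed

lemma marg_edge_iff: "(a, b) \<in> EM \<longleftrightarrow> a \<in> V - W \<and> b \<in> V - W \<and> dpath_via E W a b"
  unfolding marg_E_def by auto

lemma rtrancl_marg_imp_rtrancl: "(a, b) \<in> EM\<^sup>* \<Longrightarrow> (a, b) \<in> E\<^sup>*"
proof (induction rule: rtrancl_induct)
  case base
  then show ?case by simp
next
  case (step y z)
  then have "(y, z) \<in> E\<^sup>*"
    using marg_edge_iff dpath_via_rtrancl by blast
  with step.IH show ?case
    by (rule rtrancl_trans)
qed

lemma rtrancl_imp_rtrancl_marg:
  assumes "(a, b) \<in> E\<^sup>*" "a \<in> V - W"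
  shows "\<exists>c. c \<in> V - W \<and> (a, c) \<in> EM\<^sup>* \<and> (c, b) \<in> EW\<^sup>* \<and> (b \<notin> W \<longrightarrow> c = b)"
  using assms(1)
proof (induction rule: rtrancl_induct)
  case base
  then show ?case using assms(2) by blast
next
  case (step b b')
  then obtain c where c: "c \<in> V - W" "(a, c) \<in> EM\<^sup>*" "(c, b) \<in> EW\<^sup>*" "b \<notin> W \<longrightarrow> c = b"
    by blast
  show ?case
  proof (cases "b' \<in> W")
    case True
    then have "(c, b') \<in> EW\<^sup>*"
      using c step by (simp add: rtrancl_into_rtrancl)
    then show ?thesis using c True by blast
  next
    case False
    have "dpath_via E W c b'"
      using c step unfolding dpath_via_def by blast
    moreover have "b' \<in> V"
      using edge_nodes step by blast
    ultimately have "(c, b') \<in> EM"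
      using c False marg_edge_iff by blast
    with c(2) have "(a, b') \<in> EM\<^sup>*"
      by (rule rtrancl_into_rtrancl)
    then show ?thesis
      using False \<open>b' \<in> V\<close> by blast
  qed
qed

lemma rtrancl_marg_iff: "a \<in> V - W \<Longrightarrow> b \<in> V - W \<Longrightarrow> (a, b) \<in> EM\<^sup>* \<longleftrightarrow> (a, b) \<in> E\<^sup>*"
  using rtrancl_marg_imp_rtrancl rtrancl_imp_rtrancl_marg by blast

lemma sc_marg: "u \<in> V - W \<Longrightarrow> v \<in> V - W \<Longrightarrow> u \<in> sc EM v \<longleftrightarrow> u \<in> sc E v"
  unfolding sc_def anc_def desc_def using rtrancl_marg_iff by auto

lemma anc_set_marg: "v \<in> V - W \<Longrightarrow> v \<in> anc_set EM Z \<longleftrightarrow> v \<in> anc_set E Z"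
proof -
  assume v: "v \<in> V - W"
  have "z \<in> V - W" if "z \<in> Z" for z
    using that Z_subset Z_disjoint by auto
  then show ?thesis
    unfolding anc_set_def anc_def using rtrancl_marg_iff[OF v] by blast
qed

lemma open_entry_marg:
  "v \<in> V - W \<Longrightarrow> (\<forall>p k. st = Some (p, k) \<longrightarrow> p \<in> V - W) \<Longrightarrow>
   open_entry EM Z st v ho = open_entry E Z st v ho"
  unfolding open_entry_def using sc_marg anc_set_marg by (auto split: option.splits)

lemma open_exit_marg: "v \<in> V - W \<Longrightarrow> n \<in> V - W \<Longrightarrow> open_exit EM Z v k n = open_exit E Z v k n"
  unfolding open_exit_def using sc_marg by auto


abbreviation "walk x st v \<equiv> open_walk V E H Z x st v"
abbreviation "walk_marg x st v \<equiv> open_walk (V - W) EM HM Z x st v"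

lemma edge_ok_marg_Fwd: "c \<in> V - W \<Longrightarrow> n \<in> V - W \<Longrightarrow> dpath_via E W c n \<Longrightarrow> edge_ok EM HM c Fwd n"
  unfolding edge_ok_def using marg_edge_iff by auto

lemma edge_ok_marg_Bwd: "c \<in> V - W \<Longrightarrow> n \<in> V - W \<Longrightarrow> dpath_via E W n c \<Longrightarrow> edge_ok EM HM c Bwd n"
  unfolding edge_ok_def using marg_edge_iff by auto

lemma walk_marg_step:
  assumes "walk_marg x st c" "edge_ok EM HM c k n" "n \<in> V - W"
    "open_entry E Z st c (head_out k)" "open_exit E Z c k n"
  shows "walk_marg x (Some (c, k)) n"
proof -
  have "c \<in> V - W" "\<forall>p k. st = Some (p, k) \<longrightarrow> p \<in> V - W"
    using open_walk_nodes[OF assms(1)] by auto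
  then have "open_entry EM Z st c (head_out k)" "open_exit EM Z c k n"
    using assms(3-5) open_entry_marg open_exit_marg by auto
  then show ?thesis
    using open_walk.step[OF assms(1-3)] by blast
qed

(* For visible c and w this says that {c, w} is a face of HM; for hidden w it is a marginal
   bidirected edge at c in the making. *)
definition face_linked :: "'a \<Rightarrow> 'a \<Rightarrow> bool" where
  "face_linked c w \<longleftrightarrow> (\<exists>F\<in>H. F \<subseteq> {c, w} \<union> W \<and>
     (c \<in> F \<or> (\<exists>u\<in>F \<inter> W. dpath_via E W u c)) \<and> (w \<in> F \<or> (\<exists>u\<in>F \<inter> W. dpath_via E W u w)))"

lemma face_linked_face: "{c, w} \<in> H \<Longrightarrow> face_linked c w"
  unfolding face_linked_def by blast

lemma face_linked_dpath_via: "dpath_via E W w c \<Longrightarrow> w \<in> W \<Longrightarrow> face_linked c w"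
  unfolding face_linked_def using singleton_face W_subset by (intro bexI[of _ "{w}"]) auto

lemma face_linked_bidirected: "dpath_via E W w c \<Longrightarrow> w \<in> W \<Longrightarrow> {w, n} \<in> H \<Longrightarrow> face_linked c n"
  unfolding face_linked_def by (intro bexI[of _ "{w, n}"]) auto

lemma face_linked_trans_dpath_via:
  assumes "face_linked c w" "w \<in> W" "dpath_via E W w t"
  shows "face_linked c t"
proof -
  obtain F where F: "F \<in> H" "F \<subseteq> {c, w} \<union> W" "c \<in> F \<or> (\<exists>u\<in>F \<inter> W. dpath_via E W u c)"
      "w \<in> F \<or> (\<exists>u\<in>F \<inter> W. dpath_via E W u w)"
    using assms(1) unfolding face_linked_def by blast
  have "\<exists>u\<in>F \<inter> W. dpath_via E W u t"
    using F(4) assms(2,3) dpath_via_trans by blast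
  moreover have "F \<subseteq> {c, t} \<union> W"
    using F(2) assms(2) by auto
  ultimately show ?thesis
    unfolding face_linked_def using F(1,3) by blast
qed

lemma marg_face_of_face_linked:
  assumes "face_linked c t" "c \<in> V - W" "t \<in> V - W"
  shows "{c, t} \<in> HM"
proof -
  obtain F where F: "F \<in> H" "F \<subseteq> {c, t} \<union> W" "c \<in> F \<or> (\<exists>u\<in>F \<inter> W. dpath_via E W u c)"
      "t \<in> F \<or> (\<exists>u\<in>F \<inter> W. dpath_via E W u t)"
    using assms(1) unfolding face_linked_def by blast
  then have "\<forall>v\<in>{c, t}. v \<in> F - W \<or> (\<exists>u\<in>F \<inter> W. dpath_via E W u v)"
    using assms(2,3) by blast
  then show ?thesis
    unfolding marg_H_def using F(1,2) assms(2,3) by blast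
qed

lemma marg_face_dpath_via:
  "face_linked c w \<Longrightarrow> w \<in> W \<Longrightarrow> dpath_via E W w t \<Longrightarrow> c \<in> V - W \<Longrightarrow> t \<in> V - W \<Longrightarrow> {c, t} \<in> HM"
  using face_linked_trans_dpath_via marg_face_of_face_linked by blast

section \<open>Simulating open walks in the marginal graph\<close>

(* A walk of G at a visible node v is matched by a marginal walk at v whose entry is at
   least as permissive. At a hidden node v the marginal walk stops at a visible node c, and
   either v was entered with an arrowhead and is a directed descendant of c (with c an open
   non-collider so far) or face-linked to c, or v is a directed ancestor of c through W. *)
definition simulated :: "'a \<Rightarrow> ('a \<times> edge_kind) option \<Rightarrow> 'a \<Rightarrow> bool" where
  "simulated x st v \<longleftrightarrow>
     (v \<notin> W \<longrightarrow> (\<exists>st'. walk_marg x st' v \<and> (\<forall>ho. open_entry E Z st v ho \<longrightarrow> open_entry E Z st' v ho)))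
   \<and> (v \<in> W \<longrightarrow> (\<exists>c st'. c \<in> V - W \<and> walk_marg x st' c \<and>
        ((arrives_with_head st \<and>
           ((open_entry E Z st' c False \<and> c \<notin> Z \<and> dpath_via E W c v) \<or>
            (open_entry E Z st' c True \<and> face_linked c v)))
         \<or> (open_entry E Z st' c True \<and> dpath_via E W v c))))"

lemma simulatedI_visible:
  "n \<notin> W \<Longrightarrow> walk_marg x st' n \<Longrightarrow> (\<forall>ho. open_entry E Z st n ho \<longrightarrow> open_entry E Z st' n ho) \<Longrightarrow>
   simulated x st n"
  unfolding simulated_def by blast

lemma simulatedI_descendant:
  "n \<in> W \<Longrightarrow> arrives_with_head st \<Longrightarrow> c \<in> V - W \<Longrightarrow> walk_marg x st' c \<Longrightarrow>
   open_entry E Z st' c False \<Longrightarrow> c \<notin> Z \<Longrightarrow> dpath_via E W c n \<Longrightarrow> simulated x st n"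
  unfolding simulated_def by blast

lemma simulatedI_linked:
  "n \<in> W \<Longrightarrow> arrives_with_head st \<Longrightarrow> c \<in> V - W \<Longrightarrow> walk_marg x st' c \<Longrightarrow>
   open_entry E Z st' c True \<Longrightarrow> face_linked c n \<Longrightarrow> simulated x st n"
  unfolding simulated_def by blast

lemma simulatedI_ancestor:
  "n \<in> W \<Longrightarrow> c \<in> V - W \<Longrightarrow> walk_marg x st' c \<Longrightarrow> open_entry E Z st' c True \<Longrightarrow>
   dpath_via E W n c \<Longrightarrow> simulated x st n"
  unfolding simulated_def by blast

lemma simulated_of_face_linked:
  assumes c: "c \<in> V - W" and walk: "walk_marg x st' c" and entry: "open_entry E Z st' c True"
    and linked: "face_linked c n" and nV: "n \<in> V" and head: "head_in k"
  shows "simulated x (Some (v, k)) n"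
proof (cases "n \<in> W")
  case True
  moreover have "arrives_with_head (Some (v, k))"
    using head by (simp add: arrives_with_head_def)
  ultimately show ?thesis
    using simulatedI_linked c walk entry linked by blast
next
  case nW: False
  then have nV': "n \<in> V - W"
    using nV by auto
  show ?thesis
  proof (cases "c = n")
    case True
    then show ?thesis
      using simulatedI_visible[OF nW] walk open_entry_weaken[OF entry] by blast
  next
    case False
    have "edge_ok EM HM c Bi n"
      using False marg_face_of_face_linked[OF linked c nV'] by (simp add: edge_ok_def)
    then have "walk_marg x (Some (c, Bi)) n"
      by (rule walk_marg_step[OF walk _ nV']) (simp_all add: head_out_def entry open_exit_def)
    moreover have "\<forall>ho. open_entry E Z (Some (v, k)) n ho \<longrightarrow> open_entry E Z (Some (c, Bi)) n ho"
      using head by (cases k) (simp_all add: open_entry_def head_in_def)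
    ultimately show ?thesis
      using simulatedI_visible[OF nW] by blast
  qed
qed

lemma walk_marg_back_from_ancestor:
  assumes c: "c \<in> V - W" and walk: "walk_marg x st' c" and entry: "open_entry E Z st' c True"
    and dp: "dpath_via E W v c" and vW: "v \<in> W" and nv: "(n, v) \<in> E" and nV': "n \<in> V - W"
  shows "\<exists>st''. walk_marg x st'' n \<and>
    (\<forall>ho. open_entry E Z (Some (v, Bwd)) n ho \<longrightarrow> open_entry E Z st'' n ho)"
proof -
  have dnc: "dpath_via E W n c"
    using dpath_via_trans[OF dpath_via_edge[OF nv] vW dp] .
  have walk_n: "walk_marg x (Some (c, Bwd)) n"
    by (rule walk_marg_step[OF walk edge_ok_marg_Bwd[OF c nV' dnc] nV'])
      (simp_all add: head_out_def entry open_exit_def)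
  show ?thesis
  proof (cases "n \<in> Z \<and> v \<in> sc E n")
    case False
    then show ?thesis
      using walk_n by (auto simp: open_entry_def head_in_def)
  next
    case nZ: True
    \<comment> \<open>Here the predecessor of n must lie in its strongly connected component. If c does not,
      the first visible node c' on the cycle from v back to n does; reach it bidirectedly.\<close>
    then have "(v, n) \<in> E\<^sup>*"
      unfolding sc_def anc_def by auto
    then obtain c' where c': "c' \<notin> W" "dpath_via E W v c'" "(c', n) \<in> E\<^sup>*"
      using dpath_via_first_exit vW nV' by blast
    have c'V: "c' \<in> V - W"
      using c' dpath_via_nodes by blast
    have dnc': "dpath_via E W n c'"
      using dpath_via_trans[OF dpath_via_edge[OF nv] vW c'(2)] .
    have c'_sc: "c' \<in> sc E n"
      using c'(3) dpath_via_rtrancl[OF dnc'] unfolding sc_def anc_def desc_def by auto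
    show ?thesis
    proof (cases "c' = c")
      case True
      then show ?thesis
        using walk_n c'_sc by (auto simp: open_entry_def head_in_def)
    next
      case False
      have "edge_ok EM HM c Bi c'"
        using False marg_face_dpath_via[OF face_linked_dpath_via[OF dp vW] vW c'(2) c c'V]
        by (simp add: edge_ok_def)
      then have walk_c': "walk_marg x (Some (c, Bi)) c'"
        by (rule walk_marg_step[OF walk _ c'V]) (simp_all add: head_out_def entry open_exit_def)
      have "c' \<in> anc_set E Z"
        using nZ c'(3) unfolding anc_set_def anc_def by blast
      then have "walk_marg x (Some (c', Bwd)) n"
        by (intro walk_marg_step[OF walk_c' edge_ok_marg_Bwd[OF c'V nV' dnc'] nV'])
          (simp_all add: head_out_def open_entry_def head_in_def open_exit_def)
      then show ?thesis
        using c'_sc by (auto simp: open_entry_def head_in_def)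
    qed
  qed
qed

lemma simulated_step_from_ancestor:
  assumes c: "c \<in> V - W" and walk: "walk_marg x st' c" and entry: "open_entry E Z st' c True"
    and dp: "dpath_via E W v c" and vW: "v \<in> W" and e: "edge_ok E H v k n" and nV: "n \<in> V"
  shows "simulated x (Some (v, k)) n"
proof (cases k)
  case Fwd
  then have "(v, n) \<in> E"
    using e by (simp add: edge_ok_def)
  then have "face_linked c n"
    using face_linked_trans_dpath_via[OF face_linked_dpath_via[OF dp vW] vW dpath_via_edge] by blast
  then show ?thesis
    using simulated_of_face_linked[OF c walk entry _ nV] Fwd by (simp add: head_in_def)
next
  case Bi
  then have "{v, n} \<in> H"
    using e by (simp add: edge_ok_def)
  then have "face_linked c n"
    using face_linked_bidirected[OF dp vW] by blast
  then show ?thesis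
    using simulated_of_face_linked[OF c walk entry _ nV] Bi by (simp add: head_in_def)
next
  case Bwd
  then have nv: "(n, v) \<in> E"
    using e by (simp add: edge_ok_def)
  show ?thesis
  proof (cases "n \<in> W")
    case True
    then show ?thesis
      by (rule simulatedI_ancestor[OF _ c walk entry dpath_via_trans[OF dpath_via_edge[OF nv] vW dp]])
  next
    case False
    then show ?thesis
      using walk_marg_back_from_ancestor[OF c walk entry dp vW nv] nV simulatedI_visible Bwd by blast
  qed
qed

lemma first_visible_ancestor_of_Z:
  assumes "v \<in> W" "v \<in> anc_set E Z"
  obtains c where "c \<in> V - W" "dpath_via E W v c" "c \<in> anc_set E Z"
proof -
  obtain z where z: "z \<in> Z" "(v, z) \<in> E\<^sup>*"
    using assms(2) unfolding anc_set_def anc_def by blast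
  then have "z \<notin> W"
    using Z_disjoint by blast
  then obtain c where c: "c \<notin> W" "dpath_via E W v c" "(c, z) \<in> E\<^sup>*"
    using dpath_via_first_exit z assms(1) by blast
  then have "c \<in> V - W" "c \<in> anc_set E Z"
    using dpath_via_nodes z unfolding anc_set_def anc_def by blast+
  then show ?thesis
    using that c(2) by blast
qed

lemma simulated_step_from_descendant:
  assumes c: "c \<in> V - W" and walk: "walk_marg x st' c" and entry: "open_entry E Z st' c False"
    and cZ: "c \<notin> Z" and dp: "dpath_via E W c v" and vW: "v \<in> W"
    and e: "edge_ok E H v k n" and nV: "n \<in> V" and collider: "head_out k \<longrightarrow> v \<in> anc_set E Z"
  shows "simulated x (Some (v, k)) n"
proof (cases "k = Fwd")
  case True
  then have dcn: "dpath_via E W c n"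
    using e dpath_via_trans[OF dp vW dpath_via_edge] by (simp add: edge_ok_def)
  show ?thesis
  proof (cases "n \<in> W")
    case nW: True
    have "arrives_with_head (Some (v, k))"
      using True by (simp add: arrives_with_head_def head_in_def)
    then show ?thesis
      using simulatedI_descendant[OF nW _ c walk entry cZ dcn] by blast
  next
    case nW: False
    then have nV': "n \<in> V - W"
      using nV by auto
    have "walk_marg x (Some (c, Fwd)) n"
      by (rule walk_marg_step[OF walk edge_ok_marg_Fwd[OF c nV' dcn] nV'])
        (simp_all add: head_out_def entry open_exit_notin cZ)
    then show ?thesis
      using simulatedI_visible[OF nW] True by (auto simp: open_entry_def)
  qed
next
  case False
  \<comment> \<open>v is a collider: detour from c to the first visible node below v that is an ancestor of Z.\<close>
  then have "v \<in> anc_set E Z"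
    using collider by (cases k) (auto simp: head_out_def)
  then obtain c' where c': "c' \<in> V - W" "dpath_via E W v c'" "c' \<in> anc_set E Z"
    using first_visible_ancestor_of_Z vW by blast
  have "walk_marg x (Some (c, Fwd)) c'"
    by (rule walk_marg_step[OF walk edge_ok_marg_Fwd[OF c c'(1) dpath_via_trans[OF dp vW c'(2)]] c'(1)])
      (simp_all add: head_out_def entry open_exit_notin cZ)
  moreover have "open_entry E Z (Some (c, Fwd)) c' True"
    using c'(3) by (simp add: open_entry_def)
  ultimately show ?thesis
    using simulated_step_from_ancestor[OF c'(1) _ _ c'(2) vW e nV] by blast
qed

lemma simulated_step_from_linked:
  assumes c: "c \<in> V - W" and walk: "walk_marg x st' c" and entry: "open_entry E Z st' c True"
    and linked: "face_linked c v" and vW: "v \<in> W"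
    and e: "edge_ok E H v k n" and nV: "n \<in> V" and collider: "head_out k \<longrightarrow> v \<in> anc_set E Z"
  shows "simulated x (Some (v, k)) n"
proof (cases "k = Fwd")
  case True
  then have "face_linked c n"
    using e face_linked_trans_dpath_via[OF linked vW dpath_via_edge] by (simp add: edge_ok_def)
  then show ?thesis
    using simulated_of_face_linked[OF c walk entry _ nV] True by (simp add: head_in_def)
next
  case False
  then have "v \<in> anc_set E Z"
    using collider by (cases k) (auto simp: head_out_def)
  then obtain c' where c': "c' \<in> V - W" "dpath_via E W v c'" "c' \<in> anc_set E Z"
    using first_visible_ancestor_of_Z vW by blast
  show ?thesis
  proof (cases "c' = c")
    case True
    then show ?thesis
      using simulated_step_from_ancestor[OF c walk entry _ vW e nV] c'(2) by blast
  next
    case False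
    have "edge_ok EM HM c Bi c'"
      using False marg_face_dpath_via[OF linked vW c'(2) c c'(1)] by (simp add: edge_ok_def)
    then have "walk_marg x (Some (c, Bi)) c'"
      by (rule walk_marg_step[OF walk _ c'(1)]) (simp_all add: head_out_def entry open_exit_def)
    moreover have "open_entry E Z (Some (c, Bi)) c' True"
      using c'(3) by (simp add: open_entry_def head_in_def)
    ultimately show ?thesis
      using simulated_step_from_ancestor[OF c'(1) _ _ c'(2) vW e nV] by blast
  qed
qed

lemma edge_ok_marg_of_edge_ok:
  assumes "edge_ok E H v k n" "v \<in> V - W" "n \<in> V - W"
  shows "edge_ok EM HM v k n"
proof (cases k)
  case Fwd
  then show ?thesis
    using assms edge_ok_marg_Fwd[OF assms(2,3) dpath_via_edge] by (simp add: edge_ok_def)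
next
  case Bwd
  then show ?thesis
    using assms edge_ok_marg_Bwd[OF assms(2,3) dpath_via_edge] by (simp add: edge_ok_def)
next
  case Bi
  then show ?thesis
    using assms marg_face_of_face_linked[OF face_linked_face assms(2,3)] by (simp add: edge_ok_def)
qed

lemma simulated_step_from_conditioned:
  assumes vV: "v \<in> V - W" and walk: "walk_marg x st' v" and entry: "open_entry E Z st' v False"
    and "v \<in> Z" and sc: "n \<in> sc E v" and vn: "(v, n) \<in> E" and nW: "n \<in> W"
  shows "simulated x (Some (v, Fwd)) n"
proof -
  \<comment> \<open>The directed path from n back to v leaves W at a node c in the component of v.\<close>
  have "(n, v) \<in> E\<^sup>*"
    using sc unfolding sc_def anc_def by auto
  then obtain c where c: "c \<notin> W" "dpath_via E W n c" "(c, v) \<in> E\<^sup>*"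
    using dpath_via_first_exit nW vV by blast
  have cV: "c \<in> V - W"
    using c dpath_via_nodes by blast
  have dvc: "dpath_via E W v c"
    using dpath_via_trans[OF dpath_via_edge[OF vn] nW c(2)] .
  have "c \<in> sc E v"
    using c(3) dpath_via_rtrancl[OF dvc] unfolding sc_def anc_def desc_def by auto
  then have "walk_marg x (Some (v, Fwd)) c"
    by (intro walk_marg_step[OF walk edge_ok_marg_Fwd[OF vV cV dvc] cV])
      (use entry in \<open>simp_all add: open_exit_def head_out_def\<close>)
  moreover have "open_entry E Z (Some (v, Fwd)) c True"
    using c(3) \<open>v \<in> Z\<close> unfolding open_entry_def anc_set_def anc_def by auto
  ultimately show ?thesis
    using simulatedI_ancestor[OF nW cV _ _ c(2)] by blast
qed

lemma simulated_step_from_visible: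
  assumes vV: "v \<in> V - W" and walk: "walk_marg x st' v"
    and dominates: "\<forall>ho. open_entry E Z st v ho \<longrightarrow> open_entry E Z st' v ho"
    and entry: "open_entry E Z st v (head_out k)" and exit: "open_exit E Z v k n"
    and e: "edge_ok E H v k n" and nV: "n \<in> V"
  shows "simulated x (Some (v, k)) n"
proof -
  have entry': "open_entry E Z st' v (head_out k)"
    using dominates entry by blast
  show ?thesis
  proof (cases "n \<in> W")
    case False
    then have "walk_marg x (Some (v, k)) n"
      using walk_marg_step[OF walk edge_ok_marg_of_edge_ok[OF e vV] _ entry' exit] nV by blast
    then show ?thesis
      using simulatedI_visible[OF False] by blast
  next
    case nW: True
    show ?thesis
    proof (cases k)
      case Fwd
      then have vn: "(v, n) \<in> E" and entry_Fwd: "open_entry E Z st' v False"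
        using e entry' by (simp_all add: edge_ok_def head_out_def)
      show ?thesis
      proof (cases "v \<in> Z")
        case True
        then show ?thesis
          using simulated_step_from_conditioned[OF vV walk entry_Fwd True _ vn nW] exit Fwd
          by (simp add: open_exit_def)
      next
        case False
        have "arrives_with_head (Some (v, k))"
          using Fwd by (simp add: arrives_with_head_def head_in_def)
        then show ?thesis
          using simulatedI_descendant[OF nW _ vV walk entry_Fwd False dpath_via_edge[OF vn]] by blast
      qed
    next
      case Bwd
      then have "(n, v) \<in> E" and "open_entry E Z st' v True"
        using e entry' by (simp_all add: edge_ok_def head_out_def)
      then show ?thesis
        using simulatedI_ancestor[OF nW vV walk _ dpath_via_edge] by blast
    next
      case Bi
      then have "{v, n} \<in> H" and "open_entry E Z st' v True"
        and "arrives_with_head (Some (v, k))"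
        using e entry' by (simp_all add: edge_ok_def head_out_def arrives_with_head_def head_in_def)
      then show ?thesis
        using simulatedI_linked[OF nW _ vV walk _ face_linked_face] by blast
    qed
  qed
qed

lemma simulated_if_walk: "walk x st v \<Longrightarrow> x \<in> V - W \<Longrightarrow> simulated x st v"
proof (induction rule: open_walk.induct)
  case start
  then have "walk_marg x None x"
    by (auto intro: open_walk.start)
  then show ?case
    using simulatedI_visible[of x x None None] start by blast
next
  case (step st v k n)
  show ?case
  proof (cases "v \<in> W")
    case False
    then obtain st' where "walk_marg x st' v" "\<forall>ho. open_entry E Z st v ho \<longrightarrow> open_entry E Z st' v ho"
      using step.IH step.prems unfolding simulated_def by blast
    moreover have "v \<in> V - W"
      using open_walk_nodes[OF step.hyps(1)] False by blast
    ultimately show ?thesis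
      using simulated_step_from_visible step.hyps by blast
  next
    case vW: True
    then obtain c st' where c: "c \<in> V - W" "walk_marg x st' c" and
      cases: "(arrives_with_head st \<and>
           ((open_entry E Z st' c False \<and> c \<notin> Z \<and> dpath_via E W c v) \<or>
            (open_entry E Z st' c True \<and> face_linked c v)))
         \<or> (open_entry E Z st' c True \<and> dpath_via E W v c)"
      using step.IH step.prems unfolding simulated_def by blast
    have "arrives_with_head st \<Longrightarrow> head_out k \<longrightarrow> v \<in> anc_set E Z"
      using step.hyps(4) by (auto simp: arrives_with_head_def open_entry_def split: option.splits)
    then show ?thesis
      using cases c vW step.hyps(2,3) simulated_step_from_descendant[of c x st' v k n]
        simulated_step_from_linked[of c x st' v k n] simulated_step_from_ancestor[of c x st' v k n]
      by blast
  qed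
qed


section \<open>Expanding open walks of the marginal graph\<close>

lemma walk_along_dpath_via:
  assumes walk: "walk x st u" and uW: "u \<in> W" and dp: "dpath_via E W u n"
  shows "\<exists>p. walk x (Some (p, Fwd)) n"
proof -
  obtain m where m: "(u, m) \<in> EW\<^sup>*" "(m, n) \<in> E"
    using dp unfolding dpath_via_def by blast
  have "\<exists>st. walk x st m \<and> m \<notin> Z"
    using m(1)
  proof (induction rule: rtrancl_induct)
    case base
    then show ?case using walk uW Z_disjoint by blast
  next
    case (step y z)
    then obtain st' where walk_y: "walk x st' y" and "y \<notin> Z"
      by blast
    have "(y, z) \<in> E" "z \<in> W"
      using step by auto
    then have "walk x (Some (y, Fwd)) z"
      using open_walk.step[OF walk_y] edge_nodes \<open>y \<notin> Z\<close>
      by (simp add: edge_ok_def open_entry_no_head open_exit_notin head_out_def)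
    then show ?case
      using \<open>z \<in> W\<close> Z_disjoint by blast
  qed
  then obtain st' where walk_m: "walk x st' m" and "m \<notin> Z"
    by blast
  then have "walk x (Some (m, Fwd)) n"
    using open_walk.step[OF walk_m] m(2) edge_nodes
    by (simp add: edge_ok_def open_entry_no_head open_exit_notin head_out_def)
  then show ?thesis by blast
qed

lemma walk_against_dpath_via:
  assumes walk: "walk x st v" and entry: "open_entry E Z st v True" and dp: "dpath_via E W n v"
  shows "\<exists>p. walk x (Some (p, Bwd)) n \<and> (n, p) \<in> E \<and> (p, v) \<in> E\<^sup>*"
proof -
  obtain m where m: "(n, m) \<in> EW\<^sup>*" "(m, v) \<in> E"
    using dp unfolding dpath_via_def by blast
  have walk_m: "walk x (Some (v, Bwd)) m"
    by (rule open_walk.step[OF walk])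
      (use m edge_nodes entry in \<open>auto simp: edge_ok_def open_exit_def head_out_def\<close>)
  have "\<forall>p. walk x (Some (p, Bwd)) m \<longrightarrow> (m, p) \<in> E \<longrightarrow> (p, v) \<in> E\<^sup>* \<longrightarrow>
     (\<exists>p'. walk x (Some (p', Bwd)) n \<and> (n, p') \<in> E \<and> (p', v) \<in> E\<^sup>*)"
    using m(1)
  proof (induction rule: rtrancl_induct)
    case base
    then show ?case by blast
  next
    case (step y z)
    show ?case
    proof (intro allI impI)
      fix p
      assume walk_z: "walk x (Some (p, Bwd)) z" and "(z, p) \<in> E" "(p, v) \<in> E\<^sup>*"
      have yz: "(y, z) \<in> E" "z \<in> W"
        using step by auto
      have "walk x (Some (z, Bwd)) y"
        by (rule open_walk.step[OF walk_z]) (use yz edge_nodes Z_disjoint in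
          \<open>auto simp: edge_ok_def open_entry_def open_exit_def head_out_def head_in_def\<close>)
      moreover have "(z, v) \<in> E\<^sup>*"
        using \<open>(z, p) \<in> E\<close> \<open>(p, v) \<in> E\<^sup>*\<close> by (meson converse_rtrancl_into_rtrancl)
      ultimately show "\<exists>p'. walk x (Some (p', Bwd)) n \<and> (n, p') \<in> E \<and> (p', v) \<in> E\<^sup>*"
        using step.IH yz by blast
    qed
  qed
  then show ?thesis
    using walk_m m(2) by blast
qed

lemma walk_expand_marg_Fwd:
  assumes walk: "walk x st v" and entry: "open_entry E Z st v False" and exit: "open_exit E Z v Fwd n"
    and dp: "dpath_via E W v n" and nV: "n \<in> V"
  shows "\<exists>p. walk x (Some (p, Fwd)) n"
  using dpath_via_cases[OF dp]
proof
  assume "(v, n) \<in> E"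
  then have "walk x (Some (v, Fwd)) n"
    using open_walk.step[OF walk] nV entry exit by (simp add: edge_ok_def head_out_def)
  then show ?thesis by blast
next
  assume "\<exists>u. (v, u) \<in> E \<and> u \<in> W \<and> dpath_via E W u n"
  then obtain u where u: "(v, u) \<in> E" "u \<in> W" "dpath_via E W u n"
    by blast
  \<comment> \<open>u lies on a directed path from v to n, so u is in the component of v whenever n is.\<close>
  have "open_exit E Z v Fwd u"
  proof -
    have "u \<in> sc E v" if "v \<in> Z"
    proof -
      have "(n, v) \<in> E\<^sup>*"
        using exit that unfolding open_exit_def sc_def anc_def by auto
      with dpath_via_rtrancl[OF u(3)] have "(u, v) \<in> E\<^sup>*"
        by (rule rtrancl_trans)
      then show ?thesis
        using u(1) unfolding sc_def anc_def desc_def by auto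
    qed
    then show ?thesis
      by (simp add: open_exit_def)
  qed
  then have "walk x (Some (v, Fwd)) u"
    using open_walk.step[OF walk] u(1) edge_nodes entry by (simp add: edge_ok_def head_out_def)
  then show ?thesis
    using walk_along_dpath_via u by blast
qed

lemma walk_expand_marg_Bwd:
  assumes walk: "walk x st v" and entry: "open_entry E Z st v True" and dp: "dpath_via E W n v"
  shows "\<exists>p. walk x (Some (p, Bwd)) n \<and>
    (\<forall>ho. open_entry E Z (Some (v, Bwd)) n ho \<longrightarrow> open_entry E Z (Some (p, Bwd)) n ho)"
proof -
  obtain p where p: "walk x (Some (p, Bwd)) n" "(n, p) \<in> E" "(p, v) \<in> E\<^sup>*"
    using walk_against_dpath_via[OF walk entry dp] by blast
  have "p \<in> sc E n" if "v \<in> sc E n"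
  proof -
    have "(p, n) \<in> E\<^sup>*"
      using that p(3) unfolding sc_def anc_def by (meson mem_Collect_eq rtrancl_trans IntD1)
    then show ?thesis
      using p(2) unfolding sc_def anc_def desc_def by auto
  qed
  then show ?thesis
    using p(1) by (auto simp: open_entry_def head_in_def)
qed


lemma walk_into_face:
  assumes walk: "walk x st v" and entry: "open_entry E Z st v True"
    and Fv: "v \<in> F \<or> (\<exists>u\<in>F \<inter> W. dpath_via E W u v)"
  obtains st' a where "walk x st' a" "open_entry E Z st' a True" "a \<in> F" "a = v \<or> a \<in> W"
proof (cases "v \<in> F")
  case True
  show ?thesis
    by (rule that[OF walk entry True]) simp
next
  case False
  then obtain u where u: "u \<in> F" "u \<in> W" "dpath_via E W u v"
    using Fv by blast
  obtain p where p: "walk x (Some (p, Bwd)) u"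
    using walk_against_dpath_via[OF walk entry u(3)] by blast
  have "u \<notin> Z"
    using u Z_disjoint by blast
  then have "open_entry E Z (Some (p, Bwd)) u True"
    by (simp add: open_entry_def head_in_def)
  then show ?thesis
    by (rule that[OF p]) (use u in simp_all)
qed

lemma walk_out_of_face:
  assumes walk: "walk x st a" and entry: "open_entry E Z st a True"
    and F: "F \<in> H" "a \<in> F" and "a \<noteq> n" "n \<in> V"
    and Fn: "n \<in> F \<or> (\<exists>u\<in>F \<inter> W. dpath_via E W u n)"
  shows "\<exists>p k. walk x (Some (p, k)) n \<and> head_in k"
proof (cases "n \<in> F")
  case True
  then have "{a, n} \<in> H"
    using F face_subset_closed[OF F(1), of "{a, n}"] by simp
  then have "walk x (Some (a, Bi)) n"
    using open_walk.step[OF walk, of Bi n] entry \<open>a \<noteq> n\<close> \<open>n \<in> V\<close>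
    by (simp add: edge_ok_def open_exit_def head_out_def)
  then show ?thesis
    by (intro exI[of _ a] exI[of _ Bi]) (simp add: head_in_def)
next
  case False
  then obtain u where u: "u \<in> F" "u \<in> W" "dpath_via E W u n"
    using Fn by blast
  have "\<exists>p. walk x (Some (p, Fwd)) n"
  proof (cases "a = u")
    case True
    then show ?thesis
      using walk_along_dpath_via[of x st u n] walk u(2,3) by simp
  next
    case False
    have "{a, u} \<in> H"
      using u(1) F face_subset_closed[OF F(1), of "{a, u}"] by simp
    moreover have "u \<in> V"
      using u(1) face_subset[OF F(1)] by blast
    ultimately have "walk x (Some (a, Bi)) u"
      using open_walk.step[OF walk, of Bi u] entry False
      by (simp add: edge_ok_def open_exit_def head_out_def)
    then show ?thesis
      using walk_along_dpath_via[of x "Some (a, Bi)" u n] u(2,3) by simp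
  qed
  then show ?thesis
    by (auto simp: head_in_def)
qed

(* The face of H behind a marginal edge v <-> n is entered from v against a directed path
   through W, crossed bidirectedly, and left along a directed path through W into n. *)
lemma walk_expand_marg_Bi:
  assumes walk: "walk x st v" and entry: "open_entry E Z st v True"
    and "v \<noteq> n" and face: "{v, n} \<in> HM"
  shows "\<exists>p k. walk x (Some (p, k)) n \<and> head_in k"
proof -
  have nV: "n \<in> V - W"
    using face unfolding marg_H_def by auto
  have "\<exists>F\<in>H. F \<subseteq> {v, n} \<union> W \<and> (v \<in> F - W \<or> (\<exists>u\<in>F \<inter> W. dpath_via E W u v)) \<and>
      (n \<in> F - W \<or> (\<exists>u\<in>F \<inter> W. dpath_via E W u n))"
    using face unfolding marg_H_def by (simp, blast)
  then obtain F where F: "F \<in> H"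
    and Fv: "v \<in> F \<or> (\<exists>u\<in>F \<inter> W. dpath_via E W u v)"
    and Fn: "n \<in> F \<or> (\<exists>u\<in>F \<inter> W. dpath_via E W u n)"
    by blast
  obtain st' a where a: "walk x st' a" "open_entry E Z st' a True" "a \<in> F" "a = v \<or> a \<in> W"
    using walk_into_face[OF walk entry Fv] by blast
  have "a \<noteq> n"
    using a(4) \<open>v \<noteq> n\<close> nV by blast
  with a show ?thesis
    using walk_out_of_face[OF _ _ F] nV Fn by blast
qed

lemma walk_if_walk_marg:
  "walk_marg x st' v \<Longrightarrow> \<exists>st. walk x st v \<and> (\<forall>ho. open_entry E Z st' v ho \<longrightarrow> open_entry E Z st v ho)"
proof (induction rule: open_walk.induct)
  case start
  then show ?case
    by (auto intro: open_walk.start)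
next
  case (step st' v k n)
  obtain st where walk: "walk x st v"
    and dominates: "\<forall>ho. open_entry E Z st' v ho \<longrightarrow> open_entry E Z st v ho"
    using step.IH by blast
  have vV: "v \<in> V - W" and "\<forall>p k. st' = Some (p, k) \<longrightarrow> p \<in> V - W"
    using open_walk_nodes[OF step.hyps(1)] by auto
  then have entry: "open_entry E Z st v (head_out k)"
    using step.hyps(4) open_entry_marg dominates by simp
  have exit: "open_exit E Z v k n"
    using step.hyps(3,5) open_exit_marg[OF vV] by simp
  show ?case
  proof (cases k)
    case Fwd
    have "dpath_via E W v n"
      using Fwd step.hyps(2) marg_edge_iff by (simp add: edge_ok_def)
    moreover have "open_entry E Z st v False"
      using Fwd entry by (simp add: head_out_def)
    moreover have "open_exit E Z v Fwd n"
      using Fwd exit by simp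
    moreover have "n \<in> V"
      using step.hyps(3) by simp
    ultimately obtain p where "walk x (Some (p, Fwd)) n"
      using walk_expand_marg_Fwd[OF walk] by blast
    then show ?thesis
      unfolding Fwd by (intro exI[of _ "Some (p, Fwd)"]) (simp add: open_entry_def)
  next
    case Bwd
    have "dpath_via E W n v"
      using Bwd step.hyps(2) marg_edge_iff by (simp add: edge_ok_def)
    moreover have "open_entry E Z st v True"
      using Bwd entry by (simp add: head_out_def)
    ultimately show ?thesis
      unfolding Bwd using walk_expand_marg_Bwd[OF walk] by blast
  next
    case Bi
    have "v \<noteq> n" "{v, n} \<in> HM"
      using Bi step.hyps(2) by (simp_all add: edge_ok_def)
    moreover have "open_entry E Z st v True"
      using Bi entry by (simp add: head_out_def)
    ultimately obtain p k' where "walk x (Some (p, k')) n" "head_in k'"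
      using walk_expand_marg_Bi[OF walk] by blast
    moreover have "open_entry E Z (Some (p, k')) n ho" if "open_entry E Z (Some (v, k)) n ho" for ho
      using that Bi \<open>head_in k'\<close> by (cases k') (auto simp: open_entry_def head_in_def)
    ultimately show ?thesis
      by blast
  qed
qed

lemma walk_marg_iff_walk:
  "x \<in> V - W \<Longrightarrow> y \<in> V - W \<Longrightarrow> (\<exists>st. walk_marg x st y) \<longleftrightarrow> (\<exists>st. walk x st y)"
proof
  assume "x \<in> V - W" "y \<in> V - W" "\<exists>st. walk x st y"
  then obtain st where "simulated x st y"
    using simulated_if_walk by blast
  with \<open>y \<in> V - W\<close> show "\<exists>st. walk_marg x st y"
    unfolding simulated_def by blast
next
  assume "\<exists>st. walk_marg x st y"
  then show "\<exists>st. walk x st y"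
    using walk_if_walk_marg by blast
qed

end

theorem mainTheorem6:
  fixes V :: "'a set" and E :: "('a \<times> 'a) set" and H :: "'a set set"
    and W X Y Z :: "'a set"
  assumes "hedg V E H"
    and "W \<subseteq> V" and "X \<subseteq> V" and "Y \<subseteq> V" and "Z \<subseteq> V"
    and "(X \<union> Y \<union> Z) \<inter> W = {}"
  shows "sigma_sep V E H X Y Z \<longleftrightarrow>
         sigma_sep (V - W) (marg_E V E W) (marg_H V E H W) X Y Z"
proof -
  interpret hedg_marginalization V E H W Z
    using assms by unfold_locales auto
  have "(\<exists>st. open_walk (V - W) (marg_E V E W) (marg_H V E H W) Z x st y) \<longleftrightarrow>
      (\<exists>st. open_walk V E H Z x st y)" if "x \<in> X \<union> Y" "y \<in> X \<union> Y" for x y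
    using that assms(2-6) by (intro walk_marg_iff_walk) auto
  then show ?thesis
    unfolding sigma_sep_iff_no_open_walk by (intro iff_allI imp_cong[OF refl]) blast
qed

end
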